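(* For every real $0<B<1$ and positive integer $L$, $$\sum_{\ell=1}^L\frac{L+1-\ell}{\sin^2\left(\frac{\pi\ell B}{L}\right)}=\frac{L^3}{6B^2}-\frac{L^2\log L}{\pi^2B^2}+O_B(L^2),$$ where the implied constant depends only on $B$. *)

theory Defs
  imports "HOL-Analysis.Analysis"
begin

end

theory Submission
  imports Defs "HOL-Analysis.Analysis"
begin

text \<open>
  Put \<open>x\<^sub>l = \<pi> l B / L \<in> (0, \<pi> B]\<close>. The sine is concave on \<open>[0, \<pi>]\<close>, so on \<open>[0, \<pi> B]\<close> it
  lies above its chord: \<open>sin x \<ge> c x\<close> with \<open>c = sin (\<pi> B) / (\<pi> B) > 0\<close>. Together with
  \<open>x - sin x \<le> x\<^sup>3 / 6\<close> this traps \<open>1 / sin\<^sup>2 x - 1 / x\<^sup>2\<close> in \<open>[0, 1 / (3 c\<^sup>2)]\<close>, so replacing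
  \<open>sin x\<^sub>l\<close> by \<open>x\<^sub>l\<close> costs \<open>O(L\<^sup>2)\<close> against the weights \<open>L + 1 - l \<le> L\<close>. What remains is
  \<open>L\<^sup>2 / (\<pi>\<^sup>2 B\<^sup>2) \<Sum> (L + 1 - l) / l\<^sup>2 = L\<^sup>2 / (\<pi>\<^sup>2 B\<^sup>2) ((L + 1) \<Sum> 1 / l\<^sup>2 - H\<^sub>L)\<close>, and the tail
  estimate \<open>\<pi>\<^sup>2 / 6 - 1 / L \<le> \<Sum>\<^sub>l\<^sub>\<le>\<^sub>L 1 / l\<^sup>2 \<le> \<pi>\<^sup>2 / 6\<close> together with \<open>ln L \<le> H\<^sub>L \<le> ln L + 1\<close>
  makes the bracket \<open>\<pi>\<^sup>2 L / 6 - ln L + O(1)\<close>.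
\<close>

lemma sin_ge_chord:
  fixes a x :: real
  assumes "0 \<le> x" "x \<le> a" "a \<le> pi"
  shows "sin a / a * x \<le> sin x"
proof -
  have "concave_on {0..a} sin"
    by (rule f''_le0_imp_concave[where f' = cos and f'' = "\<lambda>x. - sin x"])
       (use assms in \<open>auto intro!: derivative_eq_intros sin_ge_zero\<close>)
  from concave_onD_Icc'[OF this, of x] show ?thesis using assms by simp
qed

lemma cos_ge_1_minus_half_square: "1 - x\<^sup>2 / 2 \<le> cos (x::real)"
proof -
  have "(sin (x/2))\<^sup>2 \<le> (x/2)\<^sup>2"
    using abs_sin_x_le_abs_x[of "x/2"] by (metis abs_ge_zero power2_abs power_mono)
  then show ?thesis using cos_double_sin[of "x/2"] by (simp add: power_divide)
qed

lemma sin_x_ge_x_minus_cube: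
  fixes x :: real
  assumes "0 \<le> x"
  shows "x - x ^ 3 / 6 \<le> sin x"
proof -
  have "(\<lambda>t. t ^ 3 / 6 - t + sin t) 0 \<le> (\<lambda>t. t ^ 3 / 6 - t + sin t) x"
  proof (rule DERIV_nonneg_imp_nondecreasing[OF assms])
    fix t :: real
    have "((\<lambda>t. t ^ 3 / 6 - t + sin t) has_real_derivative t\<^sup>2 / 2 - 1 + cos t) (at t)"
      by (auto intro!: derivative_eq_intros simp: power2_eq_square)
    then show "\<exists>y. ((\<lambda>t. t ^ 3 / 6 - t + sin t) has_real_derivative y) (at t) \<and> 0 \<le> y"
      using cos_ge_1_minus_half_square[of t] by force
  qed
  then show ?thesis by simp
qed

definition inverse_sin_square_defect :: "real \<Rightarrow> real" where
  "inverse_sin_square_defect x = 1 / (sin x)\<^sup>2 - 1 / x\<^sup>2"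

lemma inverse_sin_square_defect_bounds:
  fixes c x :: real
  assumes c: "0 < c" and x: "0 < x" and lower: "c * x \<le> sin x"
  shows "0 \<le> inverse_sin_square_defect x" and "inverse_sin_square_defect x \<le> 1 / (3 * c\<^sup>2)"
  unfolding inverse_sin_square_defect_def
proof -
  have sin_pos: "0 < sin x" using mult_pos_pos[OF c x] lower by linarith
  have sin_le: "sin x \<le> x" using sin_x_le_x x by simp
  have eq: "1 / (sin x)\<^sup>2 - 1 / x\<^sup>2 = (x - sin x) * (x + sin x) / (x\<^sup>2 * (sin x)\<^sup>2)"
    using sin_pos x by (simp add: field_simps power2_eq_square)
  have num_nonneg: "0 \<le> (x - sin x) * (x + sin x)" using sin_le sin_pos by simp
  then show "0 \<le> 1 / (sin x)\<^sup>2 - 1 / x\<^sup>2" unfolding eq by simp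
  have "(x - sin x) * (x + sin x) \<le> (x ^ 3 / 6) * (2 * x)"
    using sin_x_ge_x_minus_cube[of x] x sin_le sin_pos by (intro mult_mono) auto
  moreover have "c\<^sup>2 * x ^ 4 \<le> x\<^sup>2 * (sin x)\<^sup>2"
  proof -
    have "(c * x)\<^sup>2 \<le> (sin x)\<^sup>2" using c x lower by (intro power_mono) auto
    then have "x\<^sup>2 * (c * x)\<^sup>2 \<le> x\<^sup>2 * (sin x)\<^sup>2" by (rule mult_left_mono) simp
    then show ?thesis by (simp add: power_mult_distrib power4_eq_xxxx power2_eq_square mult_ac)
  qed
  ultimately have "(x - sin x) * (x + sin x) / (x\<^sup>2 * (sin x)\<^sup>2) \<le> (x ^ 4 / 3) / (c\<^sup>2 * x ^ 4)"
    using num_nonneg c x by (intro frac_le) (auto simp: power3_eq_cube power4_eq_xxxx)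
  also have "\<dots> = 1 / (3 * c\<^sup>2)" using x by (simp add: field_simps)
  finally show "1 / (sin x)\<^sup>2 - 1 / x\<^sup>2 \<le> 1 / (3 * c\<^sup>2)" unfolding eq .
qed

lemma sum_reversed_weights_bounds:
  fixes f :: "nat \<Rightarrow> real"
  assumes "\<And>l. l \<in> {1..L} \<Longrightarrow> 0 \<le> f l \<and> f l \<le> M"
  shows "0 \<le> (\<Sum>l=1..L. (real L + 1 - real l) * f l)"
    and "(\<Sum>l=1..L. (real L + 1 - real l) * f l) \<le> M * (real L)\<^sup>2"
proof -
  show "0 \<le> (\<Sum>l=1..L. (real L + 1 - real l) * f l)"
    using assms by (intro sum_nonneg mult_nonneg_nonneg) auto
  have "(\<Sum>l=1..L. (real L + 1 - real l) * f l) \<le> (\<Sum>l=1..L. real L * M)"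
    using assms by (intro sum_mono mult_mono) auto
  then show "(\<Sum>l=1..L. (real L + 1 - real l) * f l) \<le> M * (real L)\<^sup>2"
    by (simp add: power2_eq_square mult_ac)
qed

lemma sum_weighted_inverse_sin_square_defect_bounds:
  fixes B :: real
  assumes "0 < B" "B < 1"
  defines "c \<equiv> sin (pi * B) / (pi * B)"
  shows "0 \<le> (\<Sum>l=1..L. (real L + 1 - real l) * inverse_sin_square_defect (pi * real l * B / real L))"
    and "(\<Sum>l=1..L. (real L + 1 - real l) * inverse_sin_square_defect (pi * real l * B / real L))
          \<le> 1 / (3 * c\<^sup>2) * (real L)\<^sup>2"
proof -
  have "0 < c" unfolding c_def using assms by (simp add: sin_gt_zero)
  have defect_bounds: "0 \<le> inverse_sin_square_defect (pi * real l * B / real L)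
      \<and> inverse_sin_square_defect (pi * real l * B / real L) \<le> 1 / (3 * c\<^sup>2)"
    if "l \<in> {1..L}" for l
  proof -
    have x: "0 < pi * real l * B / real L" "pi * real l * B / real L \<le> pi * B"
      using assms that by (auto simp: field_simps mult_left_mono)
    then have "c * (pi * real l * B / real L) \<le> sin (pi * real l * B / real L)"
      unfolding c_def using assms by (intro sin_ge_chord) auto
    from inverse_sin_square_defect_bounds[OF \<open>0 < c\<close> x(1) this] show ?thesis by simp
  qed
  show "0 \<le> (\<Sum>l=1..L. (real L + 1 - real l) * inverse_sin_square_defect (pi * real l * B / real L))"
    and "(\<Sum>l=1..L. (real L + 1 - real l) * inverse_sin_square_defect (pi * real l * B / real L))
          \<le> 1 / (3 * c\<^sup>2) * (real L)\<^sup>2"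
    using sum_reversed_weights_bounds[OF defect_bounds] by auto
qed

lemma sum_inverse_sin_squares_split:
  fixes B :: real
  assumes "B \<noteq> 0"
  shows "(\<Sum>l=1..L. (real L + 1 - real l) / (sin (pi * real l * B / real L))\<^sup>2)
    = (real L)\<^sup>2 / (pi\<^sup>2 * B\<^sup>2) * (\<Sum>l=1..L. (real L + 1 - real l) / (real l)\<^sup>2)
      + (\<Sum>l=1..L. (real L + 1 - real l) * inverse_sin_square_defect (pi * real l * B / real L))"
  unfolding sum_distrib_left sum.distrib[symmetric]
proof (rule sum.cong[OF refl])
  fix l
  assume "l \<in> {1..L}"
  then have "1 / (pi * real l * B / real L)\<^sup>2 = (real L)\<^sup>2 / (pi\<^sup>2 * B\<^sup>2) / (real l)\<^sup>2"
    using assms by (simp add: field_simps)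
  then show "(real L + 1 - real l) / (sin (pi * real l * B / real L))\<^sup>2
    = (real L)\<^sup>2 / (pi\<^sup>2 * B\<^sup>2) * ((real L + 1 - real l) / (real l)\<^sup>2)
      + (real L + 1 - real l) * inverse_sin_square_defect (pi * real l * B / real L)"
    by (simp add: inverse_sin_square_defect_def algebra_simps)
qed

lemma sum_inverse_squares_le:
  "(\<Sum>l=1..L. 1 / (real l)\<^sup>2) \<le> pi\<^sup>2 / 6"
proof -
  have sums: "(\<lambda>n. 1 / (real n + 1)\<^sup>2) sums (pi\<^sup>2 / 6)"
    using inverse_squares_sums by (simp add: add.commute)
  have "(\<Sum>n<L. 1 / (real n + 1)\<^sup>2) \<le> (\<Sum>n. 1 / (real n + 1)\<^sup>2)"
    using sums_summable[OF sums] by (rule sum_le_suminf) auto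
  then show ?thesis using sums_unique[OF sums] by (simp add: sum.atLeast1_atMost_eq add.commute)
qed

lemma sum_inverse_squares_ge:
  assumes "L \<ge> 1"
  shows "pi\<^sup>2 / 6 - 1 / real L \<le> (\<Sum>l=1..L. 1 / (real l)\<^sup>2)"
proof -
  define f where "f n = 1 / (real n + 1)\<^sup>2" for n
  define g where "g = (\<lambda>n. 1 / real (n + L))"
  have f_sums: "f sums (pi\<^sup>2 / 6)" using inverse_squares_sums unfolding f_def by (simp add: add.commute)
  have g_lim: "g \<longlonglongrightarrow> 0"
    using LIMSEQ_ignore_initial_segment[OF lim_inverse_n, of L] by (simp add: g_def inverse_eq_divide)
  have telescope: "(\<lambda>n. g n - g (Suc n)) sums (1 / real L)"
    using telescope_sums'[OF g_lim] by (simp add: g_def)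
  have dominated: "f (n + L) \<le> g n - g (Suc n)" for n
  proof -
    have pos: "0 < real (n + L)" using assms by simp
    have "g n - g (Suc n) = 1 / (real (n + L) * (real (n + L) + 1))"
      unfolding g_def using pos by (simp add: field_simps)
    moreover have "1 / (real (n + L) + 1)\<^sup>2 \<le> 1 / (real (n + L) * (real (n + L) + 1))"
      using pos by (intro divide_left_mono) (auto simp: power2_eq_square)
    ultimately show ?thesis unfolding f_def by (simp add: add_ac)
  qed
  have "(\<Sum>n. f (n + L)) \<le> (\<Sum>n. g n - g (Suc n))"
    using summable_ignore_initial_segment[OF sums_summable[OF f_sums]] sums_summable[OF telescope]
    by (rule suminf_le[OF dominated])
  also have "\<dots> = 1 / real L" using sums_unique[OF telescope] by simp
  finally have "(\<Sum>n. f (n + L)) \<le> 1 / real L" .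
  moreover have "pi\<^sup>2 / 6 = (\<Sum>n. f (n + L)) + (\<Sum>n<L. f n)"
    using suminf_split_initial_segment[OF sums_summable[OF f_sums]] sums_unique[OF f_sums] by simp
  moreover have "(\<Sum>l=1..L. 1 / (real l)\<^sup>2) = (\<Sum>n<L. f n)"
    unfolding f_def by (simp add: sum.atLeast1_atMost_eq add.commute)
  ultimately show ?thesis by linarith
qed

lemma sum_weighted_inverse_squares_eq:
  "(\<Sum>l=1..L. (real L + 1 - real l) / (real l)\<^sup>2)
     = (real L + 1) * (\<Sum>l=1..L. 1 / (real l)\<^sup>2) - harm L"
proof -
  have "(\<Sum>l=1..L. (real L + 1 - real l) / (real l)\<^sup>2)
      = (\<Sum>l=1..L. (real L + 1) * (1 / (real l)\<^sup>2) - 1 / real l)"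
    by (rule sum.cong) (auto simp: field_simps power2_eq_square)
  then show ?thesis by (simp add: sum_subtractf sum_distrib_left harm_def inverse_eq_divide)
qed

lemma sum_weighted_inverse_squares_bound:
  assumes "L \<ge> 1"
  shows "\<bar>(\<Sum>l=1..L. (real L + 1 - real l) / (real l)\<^sup>2) - (pi\<^sup>2 * real L / 6 - ln (real L))\<bar> \<le> 2"
proof -
  define H2 where "H2 = (\<Sum>l=1..L. 1 / (real l)\<^sup>2)"
  have H2_upper: "H2 \<le> pi\<^sup>2 / 6" unfolding H2_def by (rule sum_inverse_squares_le)
  have H2_lower: "pi\<^sup>2 / 6 - 1 / real L \<le> H2" unfolding H2_def by (rule sum_inverse_squares_ge[OF assms])
  have "0 \<le> H2" unfolding H2_def by (rule sum_nonneg) simp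
  have "-1 \<le> real L * (H2 - pi\<^sup>2 / 6)"
    using mult_left_mono[OF H2_lower, of "real L"] assms by (simp add: algebra_simps)
  moreover have "real L * (H2 - pi\<^sup>2 / 6) \<le> 0" using H2_upper by (simp add: mult_nonneg_nonpos)
  moreover have "0 \<le> harm L - ln (real L)" using euler_mascheroni_sequence_nonneg assms by simp
  moreover have "harm L - ln (real L) \<le> 1"
    using euler_mascheroni_sequence_decreasing[of 1 L] assms by (simp add: harm_def)
  moreover have "pi\<^sup>2 / 6 \<le> 2"
    using mult_mono[OF pi_approx(2) pi_approx(2)] by (simp add: power2_eq_square)
  moreover have "(\<Sum>l=1..L. (real L + 1 - real l) / (real l)\<^sup>2) - (pi\<^sup>2 * real L / 6 - ln (real L))
      = real L * (H2 - pi\<^sup>2 / 6) + H2 - (harm L - ln (real L))"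
    unfolding sum_weighted_inverse_squares_eq H2_def by (simp add: algebra_simps)
  ultimately show ?thesis using \<open>0 \<le> H2\<close> H2_upper by linarith
qed

theorem lemma8:
  fixes B :: real
  assumes "0 < B" and "B < 1"
  shows "\<exists>C. \<forall>L::nat. L \<ge> 1 \<longrightarrow>
           \<bar>(\<Sum>l=1..L. (real L + 1 - real l) / (sin (pi * real l * B / real L))^2)
             - (real L ^ 3 / (6 * B^2) - real L ^ 2 * ln (real L) / (pi^2 * B^2))\<bar>
           \<le> C * real L ^ 2"
proof -
  define c where "c = sin (pi * B) / (pi * B)"
  show ?thesis
  proof (intro exI allI impI)
    fix L :: nat
    assume L: "L \<ge> 1"
    define K where "K = (real L)\<^sup>2 / (pi\<^sup>2 * B\<^sup>2)"
    define W where "W = (\<Sum>l=1..L. (real L + 1 - real l) / (real l)\<^sup>2)"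
    define E where "E = (\<Sum>l=1..L. (real L + 1 - real l) * inverse_sin_square_defect (pi * real l * B / real L))"
    have E_bounds: "0 \<le> E" "E \<le> 1 / (3 * c\<^sup>2) * (real L)\<^sup>2"
      unfolding E_def c_def using sum_weighted_inverse_sin_square_defect_bounds[OF assms] by auto
    have split: "(\<Sum>l=1..L. (real L + 1 - real l) / (sin (pi * real l * B / real L))^2) = K * W + E"
      unfolding K_def W_def E_def by (rule sum_inverse_sin_squares_split) (use assms in simp)
    have main_term: "real L ^ 3 / (6 * B^2) - real L ^ 2 * ln (real L) / (pi^2 * B^2)
        = K * (pi\<^sup>2 * real L / 6 - ln (real L))"
      unfolding K_def using assms by (simp add: field_simps power2_eq_square power3_eq_cube)
    have "0 \<le> K" unfolding K_def by simp
    then have "\<bar>K * (W - (pi\<^sup>2 * real L / 6 - ln (real L)))\<bar> \<le> K * 2"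
      using sum_weighted_inverse_squares_bound[OF L] unfolding abs_mult W_def
      by (simp add: mult_left_mono)
    then have "\<bar>K * W + E - K * (pi\<^sup>2 * real L / 6 - ln (real L))\<bar> \<le> K * 2 + 1 / (3 * c\<^sup>2) * (real L)\<^sup>2"
      using E_bounds by (simp add: abs_le_iff algebra_simps)
    also have "\<dots> = (1 / (3 * c\<^sup>2) + 2 / (pi\<^sup>2 * B\<^sup>2)) * real L ^ 2"
      unfolding K_def by (simp add: field_simps)
    finally show "\<bar>(\<Sum>l=1..L. (real L + 1 - real l) / (sin (pi * real l * B / real L))^2)
             - (real L ^ 3 / (6 * B^2) - real L ^ 2 * ln (real L) / (pi^2 * B^2))\<bar>
           \<le> (1 / (3 * c\<^sup>2) + 2 / (pi\<^sup>2 * B\<^sup>2)) * real L ^ 2"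
      unfolding split main_term .
  qed
qed

end
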